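(* Let $k>1$, let $f$ be a positive function, differentiable on $[0,1]$, and define $g(R)=\dfrac{k-1}{\frac{k-1}{k}-R}$ for $R\neq\frac{k-1}{k}$. Consider the planar system $$\frac{dI}{d\tau}=I\,[f(R)(1-I-R)-k],\qquad \frac{dR}{d\tau}=(k-1)I-R,$$ and let $(I^*,R^* )$ be an endemic equilibrium of it such that $\frac{df}{dR}(R^* )\neq\frac{dg}{dR}(R^* )$. Then either $(I^*,R^* )$ is locally stable, or there exists another endemic equilibrium point $(\overline{I}^*,\overline{R}^* )$ with $\overline{R}^*>R^*$.
   Context: An endemic equilibrium is an equilibrium point $(I^*,R^* )$ of the system with $I^*>0$. "Locally stable" means locally asymptotically stable (both eigenvalues of the Jacobian at the point have negative real part). *)

theory Defs
  imports "HOL-Analysis.Analysis"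
begin

definition rhsI :: "(real \<Rightarrow> real) \<Rightarrow> real \<Rightarrow> real \<Rightarrow> real \<Rightarrow> real" where
  "rhsI f k I R = I * (f R * (1 - I - R) - k)"

definition rhsR :: "real \<Rightarrow> real \<Rightarrow> real \<Rightarrow> real" where
  "rhsR k I R = (k - 1) * I - R"

definition gfun :: "real \<Rightarrow> real \<Rightarrow> real" where
  "gfun k R = (k - 1) / ((k - 1) / k - R)"

text \<open>Endemic equilibrium: an equilibrium with I > 0 (R in the domain [0,1] of f).\<close>
definition endemic_eq :: "(real \<Rightarrow> real) \<Rightarrow> real \<Rightarrow> real \<Rightarrow> real \<Rightarrow> bool" where
  "endemic_eq f k I R \<longleftrightarrow> R \<in> {0..1} \<and> I > 0 \<and> rhsI f k I R = 0 \<and> rhsR k I R = 0"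

definition jac11 :: "(real \<Rightarrow> real) \<Rightarrow> real \<Rightarrow> real \<Rightarrow> real \<Rightarrow> real" where
  "jac11 f k I R = deriv (\<lambda>x. rhsI f k x R) I"
definition jac12 :: "(real \<Rightarrow> real) \<Rightarrow> real \<Rightarrow> real \<Rightarrow> real \<Rightarrow> real" where
  "jac12 f k I R = deriv (\<lambda>y. rhsI f k I y) R"
definition jac21 :: "real \<Rightarrow> real \<Rightarrow> real \<Rightarrow> real" where
  "jac21 k I R = deriv (\<lambda>x. rhsR k x R) I"
definition jac22 :: "real \<Rightarrow> real \<Rightarrow> real \<Rightarrow> real" where
  "jac22 k I R = deriv (\<lambda>y. rhsR k I y) R"

definition jac_eigenvalue :: "(real \<Rightarrow> real) \<Rightarrow> real \<Rightarrow> real \<Rightarrow> real \<Rightarrow> complex \<Rightarrow> bool" where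
  "jac_eigenvalue f k I R \<mu> \<longleftrightarrow>
     (of_real (jac11 f k I R) - \<mu>) * (of_real (jac22 k I R) - \<mu>)
       - of_real (jac12 f k I R) * of_real (jac21 k I R) = 0"

definition locally_stable :: "(real \<Rightarrow> real) \<Rightarrow> real \<Rightarrow> real \<Rightarrow> real \<Rightarrow> bool" where
  "locally_stable f k I R \<longleftrightarrow> (\<forall>\<mu>. jac_eigenvalue f k I R \<mu> \<longrightarrow> Re \<mu> < 0)"

end

theory Submission
  imports Defs "HOL-Real_Asymp.Real_Asymp"
begin

text \<open>With \<open>c = (k - 1) / k\<close>, the equilibria with \<open>I > 0\<close> are exactly the points \<open>(R / (k - 1), R)\<close>
  where \<open>f\<close> meets \<open>g(R) = (k - 1) / (c - R)\<close>, and for positive \<open>f\<close> they lie in \<open>0 < R < c\<close>.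
  At such a point the Jacobian has negative trace and its determinant has the sign of
  \<open>g'(R) - f'(R)\<close>. So if \<open>f' < g'\<close> both eigenvalues have negative real part. If \<open>f' > g'\<close>,
  then \<open>f - g\<close> vanishes at \<open>R\<close> and increases there, while \<open>g \<rightarrow> \<infinity>\<close> as \<open>R \<rightarrow> c\<close> and \<open>f\<close> is
  bounded, so \<open>f - g\<close> has a further zero in \<open>(R, c)\<close>.\<close>

lemma Re_root_neg_if_trace_neg_det_pos:
  fixes a b c d :: real and \<mu> :: complex
  assumes trace: "a + d < 0" and det: "a * d - b * c > 0"
    and root: "(of_real a - \<mu>) * (of_real d - \<mu>) - of_real b * of_real c = 0"
  shows "Re \<mu> < 0"
proof -
  obtain x y where \<mu>: "\<mu> = Complex x y" by (cases \<mu>)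
  have "Re ((of_real a - \<mu>) * (of_real d - \<mu>) - of_real b * of_real c) = 0"
    using root by simp
  then have re: "x * x - (a + d) * x + (a * d - b * c) = y * y"
    by (simp add: \<mu> algebra_simps)
  have "Im ((of_real a - \<mu>) * (of_real d - \<mu>) - of_real b * of_real c) = 0"
    using root by simp
  then have im: "y * (2 * x - (a + d)) = 0"
    by (simp add: \<mu> algebra_simps)
  show ?thesis
  proof (cases "y = 0")
    case True
    have "x * x - (a + d) * x \<ge> 0" if "x \<ge> 0"
      using that trace mult_nonpos_nonneg[of "a + d" x] mult_nonneg_nonneg[of x x] by linarith
    then show ?thesis
      using re det True \<mu> by force
  next
    case False
    with im have "x = (a + d) / 2" by simp
    then show ?thesis using trace \<mu> by simp
  qed
qed

lemma exists_zero_right_of_upcrossing: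
  fixes h :: "real \<Rightarrow> real"
  assumes "(h has_real_derivative D) (at a)" "D > 0" "h a = 0"
    and "a < b" "h b < 0" "continuous_on {a..b} h"
  shows "\<exists>x. a < x \<and> x < b \<and> h x = 0"
proof -
  obtain d where "d > 0" and inc: "\<And>e. e > 0 \<Longrightarrow> e < d \<Longrightarrow> h a < h (a + e)"
    using DERIV_pos_inc_right[OF assms(1,2)] by blast
  define e where "e = min (d / 2) ((b - a) / 2)"
  have "0 < e" "e < d" "e < b - a"
    using \<open>d > 0\<close> \<open>a < b\<close> by (simp_all add: e_def min_less_iff_disj)
  define a' where "a' = a + e"
  have a': "a < a'" "a' < b" "h a' > 0"
    using \<open>0 < e\<close> \<open>e < d\<close> \<open>e < b - a\<close> inc[of e] \<open>h a = 0\<close> by (auto simp: a'_def)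
  have "continuous_on {a'..b} h"
    using assms(6) by (rule continuous_on_subset) (use a' in auto)
  then obtain x where "a' \<le> x" "x \<le> b" "h x = 0"
    using IVT2'[of h b 0 a'] a' \<open>h b < 0\<close> by auto
  moreover have "x \<noteq> b"
    using \<open>h x = 0\<close> \<open>h b < 0\<close> by auto
  ultimately have "a < x" "x < b" "h x = 0"
    using a' by auto
  then show ?thesis by blast
qed

lemma gfun_pos_iff:
  assumes "k > 1"
  shows "gfun k R > 0 \<longleftrightarrow> R < (k - 1) / k"
  using assms by (simp add: gfun_def zero_less_divide_iff)

lemma gfun_has_real_derivative:
  assumes "k \<noteq> 1" "R \<noteq> (k - 1) / k"
  shows "(gfun k has_real_derivative gfun k R ^ 2 / (k - 1)) (at R)"
proof -
  define u where "u = (k - 1) / k - R"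
  have "u \<noteq> 0" using assms(2) by (simp add: u_def)
  have "(gfun k has_real_derivative (k - 1) / u ^ 2) (at R)"
    unfolding gfun_def[abs_def] u_def using assms(2)
    by (auto intro!: derivative_eq_intros simp: power2_eq_square)
  also have "(k - 1) / u ^ 2 = gfun k R ^ 2 / (k - 1)"
    using assms(1) \<open>u \<noteq> 0\<close> by (simp add: gfun_def u_def[symmetric] power_divide power2_eq_square)
  finally show ?thesis .
qed

lemma filterlim_gfun_at_left:
  assumes "k > 1"
  shows "filterlim (gfun k) at_top (at_left ((k - 1) / k))"
  using assms unfolding gfun_def by real_asymp

lemma endemic_eq_iff:
  assumes "k > 1"
  shows "endemic_eq f k I R \<longleftrightarrow>
    R \<in> {0..1} \<and> 0 < R \<and> R \<noteq> (k - 1) / k \<and> I = R / (k - 1) \<and> f R = gfun k R"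
proof -
  have sum: "1 - R / (k - 1) - R = k * ((k - 1) / k - R) / (k - 1)"
    using assms by (simp add: field_simps)
  have cancel: "k / (k - 1) * y = k \<longleftrightarrow> y = k - 1" for y
  proof -
    have "k / (k - 1) * y = k \<longleftrightarrow> k * y = k * (k - 1)"
      using assms by (simp add: field_simps)
    also have "\<dots> \<longleftrightarrow> y = k - 1"
      using assms by simp
    finally show ?thesis .
  qed
  have "f R * (1 - R / (k - 1) - R) = k \<longleftrightarrow> f R * ((k - 1) / k - R) = k - 1"
    unfolding sum using cancel[of "f R * ((k - 1) / k - R)"] by (simp add: ac_simps)
  also have "\<dots> \<longleftrightarrow> R \<noteq> (k - 1) / k \<and> f R = gfun k R"
  proof (cases "R = (k - 1) / k")
    case False
    then have "(k - 1) / k - R \<noteq> 0" by simp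
    then have "f R = gfun k R \<longleftrightarrow> f R * ((k - 1) / k - R) = k - 1"
      unfolding gfun_def by (rule nonzero_eq_divide_eq)
    with False show ?thesis by simp
  qed (use assms in simp)
  finally have equation: "f R * (1 - R / (k - 1) - R) = k \<longleftrightarrow> R \<noteq> (k - 1) / k \<and> f R = gfun k R" .
  have "(k - 1) * I - R = 0 \<longleftrightarrow> I = R / (k - 1)"
    using assms by (auto simp: field_simps)
  then show ?thesis
    unfolding endemic_eq_def rhsI_def rhsR_def using assms equation
    by (auto simp: zero_less_divide_iff zero_less_mult_iff)
qed

lemma endemic_eq_R_bounds:
  assumes "k > 1" "endemic_eq f k I R" "f R > 0"
  shows "0 < R" "R < (k - 1) / k"
proof -
  from assms(1,2) have "0 < R" "f R = gfun k R"
    by (auto simp: endemic_eq_iff)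
  with assms(3) show "0 < R" "R < (k - 1) / k"
    using gfun_pos_iff[OF assms(1)] by auto
qed

lemma jac11_eq: "jac11 f k I R = f R * (1 - I - R) - k - I * f R"
  unfolding jac11_def rhsI_def
  by (rule DERIV_imp_deriv) (auto intro!: derivative_eq_intros simp: algebra_simps)

lemma jac12_eq:
  assumes "(f has_real_derivative D) (at R)"
  shows "jac12 f k I R = I * (D * (1 - I - R) - f R)"
  unfolding jac12_def rhsI_def
  by (rule DERIV_imp_deriv) (auto intro!: derivative_eq_intros assms simp: algebra_simps)

lemma jac21_eq: "jac21 k I R = k - 1"
  unfolding jac21_def rhsR_def
  by (rule DERIV_imp_deriv) (auto intro!: derivative_eq_intros)

lemma jac22_eq: "jac22 k I R = - 1"
  unfolding jac22_def rhsR_def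
  by (rule DERIV_imp_deriv) (auto intro!: derivative_eq_intros)

lemma endemic_eq_locally_stable:
  assumes "k > 1" "endemic_eq f k I R" "f R > 0"
    and "f differentiable (at R)" "deriv f R < deriv (gfun k) R"
  shows "locally_stable f k I R"
proof -
  define D where "D = deriv f R"
  have fD: "(f has_real_derivative D) (at R)"
    using assms(4) unfolding D_def by (simp add: DERIV_deriv_iff_real_differentiable)
  from assms(2) have "I > 0" and balance: "f R * (1 - I - R) = k"
    by (auto simp: endemic_eq_def rhsI_def)
  from assms(1,2) have "R \<noteq> (k - 1) / k" and "f R = gfun k R"
    by (auto simp: endemic_eq_iff)
  then have "deriv (gfun k) R = f R ^ 2 / (k - 1)"
    using assms(1) by (simp add: DERIV_imp_deriv gfun_has_real_derivative)
  moreover have "(k - 1) * D < (k - 1) * deriv (gfun k) R"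
    using assms(1,5) by (simp add: D_def)
  ultimately have "(k - 1) * D < f R ^ 2"
    using assms(1) by simp
  moreover have "1 - I - R > 0"
    using balance assms(1,3) zero_less_mult_pos[of "f R" "1 - I - R"] by simp
  ultimately have "(k - 1) * D * (1 - I - R) < f R ^ 2 * (1 - I - R)"
    by (rule mult_strict_right_mono)
  moreover have "f R ^ 2 * (1 - I - R) = k * f R"
    using balance by (metis mult.assoc mult.commute power2_eq_square)
  ultimately have "k * f R - (k - 1) * D * (1 - I - R) > 0"
    by linarith
  moreover have "jac11 f k I R * jac22 k I R - jac12 f k I R * jac21 k I R
      = I * (k * f R - (k - 1) * D * (1 - I - R))"
    unfolding jac11_eq jac12_eq[OF fD] jac21_eq jac22_eq balance by (simp add: algebra_simps)
  ultimately have det: "jac11 f k I R * jac22 k I R - jac12 f k I R * jac21 k I R > 0"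
    using \<open>I > 0\<close> by simp
  have trace: "jac11 f k I R + jac22 k I R < 0"
    unfolding jac11_eq jac22_eq balance using mult_pos_pos[OF \<open>I > 0\<close> assms(3)] by simp
  show ?thesis
    unfolding locally_stable_def jac_eigenvalue_def
    using Re_root_neg_if_trace_neg_det_pos[OF trace det] by blast
qed

lemma endemic_eq_exists_right:
  assumes "k > 1" "\<forall>x\<in>{0..1}. f x > 0" "continuous_on {0..1} f" "endemic_eq f k I R"
    and "f differentiable (at R)" "deriv f R > deriv (gfun k) R"
  shows "\<exists>Ib Rb. endemic_eq f k Ib Rb \<and> Rb > R"
proof -
  define c where "c = (k - 1) / k"
  define h where "h x = f x - gfun k x" for x
  from assms(1,4) have "R \<in> {0..1}" "h R = 0"
    by (auto simp: endemic_eq_iff h_def)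
  then have R: "0 < R" "R < c"
    using endemic_eq_R_bounds[OF assms(1,4)] assms(2) unfolding c_def by auto
  have "c < 1" using assms(1) by (simp add: c_def)
  have "(gfun k has_real_derivative gfun k R ^ 2 / (k - 1)) (at R)"
    using assms(1) \<open>R < c\<close> unfolding c_def by (simp add: gfun_has_real_derivative)
  then have gD: "(gfun k has_real_derivative deriv (gfun k) R) (at R)"
    by (simp add: DERIV_imp_deriv)
  have hD: "(h has_real_derivative deriv f R - deriv (gfun k) R) (at R)"
    unfolding h_def[abs_def] using assms(5) gD
    by (auto intro!: derivative_eq_intros simp: DERIV_deriv_iff_real_differentiable)
  have "bdd_above (f ` {0..1})"
    using compact_continuous_image[OF assms(3) compact_Icc]
    by (intro bounded_imp_bdd_above compact_imp_bounded)
  then obtain M where M: "\<forall>x\<in>{0..1}. f x \<le> M"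
    by (auto simp: bdd_above_def)
  have "\<forall>\<^sub>F x in at_left c. M < gfun k x"
    using filterlim_gfun_at_left[OF assms(1)] unfolding c_def filterlim_at_top_dense by simp
  moreover have "\<forall>\<^sub>F x in at_left c. x \<in> {R<..<c}"
    using \<open>R < c\<close> by (rule eventually_at_left_real)
  ultimately have "\<forall>\<^sub>F x in at_left c. M < gfun k x \<and> x \<in> {R<..<c}"
    by (rule eventually_conj)
  then obtain b where b: "R < b" "b < c" "M < gfun k b"
    using eventually_happens'[OF trivial_limit_at_left_real] by auto
  have "f b \<le> M"
    using M b R \<open>c < 1\<close> by simp
  then have "h b < 0"
    using b by (simp add: h_def)
  have "continuous_on {R..b} (gfun k)"
    unfolding gfun_def[abs_def] using b unfolding c_def
    by (intro continuous_intros) auto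
  moreover have "continuous_on {R..b} f"
    using assms(3) by (rule continuous_on_subset) (use R b \<open>c < 1\<close> in auto)
  ultimately have "continuous_on {R..b} h"
    unfolding h_def[abs_def] by (intro continuous_intros)
  then obtain Rb where "R < Rb" "Rb < b" "h Rb = 0"
    using exists_zero_right_of_upcrossing[OF hD _ \<open>h R = 0\<close> b(1) \<open>h b < 0\<close>] assms(6) by auto
  moreover have "Rb \<in> {0..1}" "Rb \<noteq> c"
    using R b \<open>c < 1\<close> \<open>R < Rb\<close> \<open>Rb < b\<close> by auto
  ultimately have "endemic_eq f k (Rb / (k - 1)) Rb"
    using assms(1) R by (simp add: endemic_eq_iff h_def c_def)
  with \<open>R < Rb\<close> show ?thesis by blast
qed

theorem proposition1:
  fixes f :: "real \<Rightarrow> real" and k Is Rs :: real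
  assumes "k > 1"
    and "\<forall>x\<in>{0..1}. f x > 0"
    and "f differentiable_on {0..1}"
    and "endemic_eq f k Is Rs"
    and "deriv f Rs \<noteq> deriv (gfun k) Rs"
  shows "locally_stable f k Is Rs \<or>
         (\<exists>Ib Rb. endemic_eq f k Ib Rb \<and> Rb > Rs)"
proof -
  from assms(1,4) have "Rs \<in> {0..1}"
    by (simp add: endemic_eq_iff)
  with assms(2) have "f Rs > 0" by simp
  then have "0 < Rs" "Rs < (k - 1) / k"
    using endemic_eq_R_bounds[OF assms(1,4)] by auto
  moreover have "(k - 1) / k < 1"
    using assms(1) by simp
  ultimately have "Rs \<in> interior {0..1}"
    by simp
  then have "f differentiable (at Rs)"
    using assms(3) \<open>Rs \<in> {0..1}\<close>
    by (metis at_within_interior differentiable_on_def)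
  moreover have "continuous_on {0..1} f"
    using assms(3) by (rule differentiable_imp_continuous_on)
  ultimately show ?thesis
    using assms(5) endemic_eq_locally_stable[OF assms(1,4) \<open>f Rs > 0\<close>]
      endemic_eq_exists_right[OF assms(1,2) _ assms(4)]
    by (meson linorder_neq_iff)
qed

end
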